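(* In the setting described in the context, let $x\in\operatorname{supp}(\mu)$ be an isolated point of $\operatorname{supp}(\mu)$, and suppose that $K_n(x,x)\neq0$ for all large $n$ and that $\lim_{n\to\infty}G_n[f](x)=f(x)$ for every bounded continuous function $f$ on $\mathbb{R}$. Then \[ \lim_{n\to\infty}K_n(x,x)=\frac{1}{\mu(\{x\})}. \]
   Context: Let $r\ge1$ and let $\mu_1,\dots,\mu_r$ be positive Borel measures on $\mathbb{R}$ with all moments finite, forming a perfect system: for every $\vec n\in\mathbb{N}_0^r$ there is a monic polynomial $P_{\vec n}$ of degree $|\vec n|=n_1+\dots+n_r$ with $\int x^kP_{\vec n}\,d\mu_j=0$ for $0\le k\le n_j-1$, $1\le j\le r$. Type I polynomials $A_{\vec n}=(A_{\vec n,1},\dots,A_{\vec n,r})$: $\deg A_{\vec n,j}\le n_j-1$, $\sum_j\int x^kA_{\vec n,j}\,d\mu_j=0$ for $0\le k\le|\vec n|-2$, and $=1$ for $k=|\vec n|-1$. Let $\mu$ be a positive measure with $\mu_j\ll\mu$, $w_j=d\mu_j/d\mu$, $Q_{\vec n}=\sum_jA_{\vec n,j}w_j$. Fix a path $(\vec n_\ell)_{\ell\ge0}$ with $|\vec n_\ell|=\ell$, $\vec n_{\ell+1}=\vec n_\ell+\vec e_{i_\ell}$ ($\vec e_j$ the $j$-th unit vector), and set $p_\ell=P_{\vec n_\ell}$, $q_\ell=Q_{\vec n_{\ell+1}}$, so that $\int p_\ell q_{\ell'}\,d\mu=\delta_{\ell,\ell'}$. The Christoffel--Darboux kernel is $K_n(x,y)=\sum_{j=0}^{n-1}p_j(x)q_j(y)$.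 For bounded measurable $f$, $x\in\operatorname{supp}(\mu)$ and $K_n(x,x)\ne0$, define $G_n[f](x)=\frac{1}{K_n(x,x)}\int_{\mathbb{R}}K_n(x,y)K_n(y,x)f(y)\,d\mu(y)$. *)

theory Defs
  imports "HOL-Analysis.Analysis" "HOL-Computational_Algebra.Polynomial"
begin

text \<open>Multi-indices in N_0^r are represented as functions nat => nat; only the
  components j < r matter (components are 0-based: j = 0..r-1).\<close>

definition msize :: "nat \<Rightarrow> (nat \<Rightarrow> nat) \<Rightarrow> nat" where
  "msize r n = (\<Sum>j<r. n j)"

text \<open>The path: n_0 = 0, n_(l+1) = n_l + e_(i l).\<close>
definition path_index :: "(nat \<Rightarrow> nat) \<Rightarrow> nat \<Rightarrow> nat \<Rightarrow> nat" where
  "path_index i l j = card {m. m < l \<and> i m = j}"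

definition typeII_mops :: "nat \<Rightarrow> (nat \<Rightarrow> real measure) \<Rightarrow> ((nat \<Rightarrow> nat) \<Rightarrow> real poly) \<Rightarrow> bool" where
  "typeII_mops r \<mu>s P \<longleftrightarrow>
     (\<forall>n. lead_coeff (P n) = 1 \<and> degree (P n) = msize r n \<and>
          (\<forall>j<r. \<forall>k<n j. (\<integral>x. x ^ k * poly (P n) x \<partial>\<mu>s j) = 0))"

definition typeI_mops :: "nat \<Rightarrow> (nat \<Rightarrow> real measure) \<Rightarrow> ((nat \<Rightarrow> nat) \<Rightarrow> nat \<Rightarrow> real poly) \<Rightarrow> bool" where
  "typeI_mops r \<mu>s A \<longleftrightarrow>
     (\<forall>n. msize r n \<ge> 1 \<longrightarrow>
        (\<forall>j<r. A n j \<noteq> 0 \<longrightarrow> degree (A n j) < n j) \<and>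
        (\<forall>k<msize r n. (\<Sum>j<r. \<integral>x. x ^ k * poly (A n j) x \<partial>\<mu>s j)
                         = (if k = msize r n - 1 then 1 else 0)))"

definition Qfun :: "nat \<Rightarrow> ((nat \<Rightarrow> nat) \<Rightarrow> nat \<Rightarrow> real poly) \<Rightarrow> (nat \<Rightarrow> real \<Rightarrow> real)
                     \<Rightarrow> (nat \<Rightarrow> nat) \<Rightarrow> real \<Rightarrow> real" where
  "Qfun r A w n y = (\<Sum>j<r. poly (A n j) y * w j y)"

definition CD_kernel :: "nat \<Rightarrow> ((nat \<Rightarrow> nat) \<Rightarrow> real poly) \<Rightarrow> ((nat \<Rightarrow> nat) \<Rightarrow> nat \<Rightarrow> real poly)
     \<Rightarrow> (nat \<Rightarrow> real \<Rightarrow> real) \<Rightarrow> (nat \<Rightarrow> nat) \<Rightarrow> nat \<Rightarrow> real \<Rightarrow> real \<Rightarrow> real" where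
  "CD_kernel r P A w i n x y =
     (\<Sum>l<n. poly (P (path_index i l)) x * Qfun r A w (path_index i (Suc l)) y)"

definition G_op :: "real measure \<Rightarrow> (real \<Rightarrow> real \<Rightarrow> real) \<Rightarrow> (real \<Rightarrow> real) \<Rightarrow> real \<Rightarrow> real" where
  "G_op \<mu> K f x = (1 / K x x) * (\<integral>y. K x y * K y x * f y \<partial>\<mu>)"

definition msupp :: "real measure \<Rightarrow> real set" where
  "msupp \<mu> = {x. \<forall>e>0. emeasure \<mu> (ball x e) > 0}"

end

theory Submission
  imports Defs
begin

(* Near an isolated point x of its support, mu is the point mass mu({x}) at x. Testing
   G_n with a continuous tent function supported in such a neighbourhood therefore gives
   exactly G_n[f](x) = K_n(x,x) mu({x}), so the hypothesis says K_n(x,x) mu({x}) -> 1;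
   in particular mu({x}) is nonzero and K_n(x,x) -> 1/mu({x}). *)

lemma null_sets_open_disjoint_msupp:
  fixes \<mu> :: "real measure"
  assumes sets_mu: "sets \<mu> = sets borel"
    and "open S" and S_disjoint: "S \<inter> msupp \<mu> = {}"
  shows "S \<in> null_sets \<mu>"
proof -
  define F where "F = {B::real set. open B \<and> B \<in> null_sets \<mu>}"
  obtain F' where F': "F' \<subseteq> F" "countable F'" "\<Union>F' = \<Union>F"
    using Lindelof[of F] unfolding F_def by blast
  have "\<Union>F' \<in> null_sets \<mu>"
    using null_sets_UN'[of F' "\<lambda>B. B" \<mu>] F' by (auto simp: F_def)
  moreover have "S \<subseteq> \<Union>F"
  proof
    fix y assume "y \<in> S"
    then have "y \<notin> msupp \<mu>"
      using S_disjoint by blast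
    then obtain e where "e > 0" "\<not> emeasure \<mu> (ball y e) > 0"
      by (auto simp: msupp_def)
    then have "ball y e \<in> F" "y \<in> ball y e"
      using sets_mu by (auto simp: F_def null_sets_def)
    then show "y \<in> \<Union>F" by blast
  qed
  moreover have "S \<in> sets \<mu>"
    using \<open>open S\<close> sets_mu by simp
  ultimately show ?thesis
    using F'(3) null_sets_subset by metis
qed

lemma integral_isolated_msupp_point:
  fixes \<mu> :: "real measure" and g :: "real \<Rightarrow> real"
  assumes sets_mu: "sets \<mu> = sets borel"
    and isolated: "msupp \<mu> \<inter> ball x e = {x}"
    and g_meas: "g \<in> borel_measurable borel"
    and g_vanishes: "\<And>y. y \<notin> ball x e \<Longrightarrow> g y = 0"
  shows "(\<integral>y. g y \<partial>\<mu>) = g x * measure \<mu> {x}"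
  \<comment> \<open>if \<mu> {x} is infinite, both sides are 0 by the junk values of integral and measure\<close>
proof -
  have null: "ball x e - {x} \<in> null_sets \<mu>"
    using isolated by (intro null_sets_open_disjoint_msupp[OF sets_mu]) auto
  have "x \<in> ball x e"
    using isolated by blast
  have "g y = g x * indicator {x} y" if "y \<notin> ball x e - {x}" for y
  proof (cases "y = x")
    case False
    then show ?thesis
      using that \<open>x \<in> ball x e\<close> g_vanishes by simp
  qed simp
  then have "AE y in \<mu>. g y = g x * indicator {x} y"
    by (intro AE_I'[OF null]) blast
  moreover have "g \<in> borel_measurable \<mu>"
    using g_meas measurable_cong_sets[OF sets_mu refl] by blast
  moreover have "(\<lambda>y. g x * indicator {x} y) \<in> borel_measurable \<mu>"
    using sets_mu by (simp add: measurable_cong_sets[OF sets_mu refl])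
  ultimately have "(\<integral>y. g y \<partial>\<mu>) = (\<integral>y. g x * indicator {x} y \<partial>\<mu>)"
    by (intro integral_cong_AE)
  also have "\<dots> = g x * measure \<mu> {x}"
    using sets_mu by simp
  finally show ?thesis .
qed

lemma G_op_isolated_msupp_point:
  fixes \<mu> :: "real measure" and K :: "real \<Rightarrow> real \<Rightarrow> real"
  assumes sets_mu: "sets \<mu> = sets borel"
    and isolated: "msupp \<mu> \<inter> ball x e = {x}"
    and K_meas: "K x \<in> borel_measurable borel" "(\<lambda>y. K y x) \<in> borel_measurable borel"
    and f_meas: "f \<in> borel_measurable borel"
    and f_vanishes: "\<And>y. y \<notin> ball x e \<Longrightarrow> f y = 0"
    and "f x = 1" and "K x x \<noteq> 0"
  shows "G_op \<mu> K f x = K x x * measure \<mu> {x}"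
proof -
  have "(\<integral>y. K x y * K y x * f y \<partial>\<mu>) = K x x * K x x * measure \<mu> {x}"
    using integral_isolated_msupp_point[OF sets_mu isolated, of "\<lambda>y. K x y * K y x * f y"]
      K_meas f_meas f_vanishes \<open>f x = 1\<close> by simp
  then show ?thesis
    using \<open>K x x \<noteq> 0\<close> by (simp add: G_op_def)
qed

definition tent :: "real \<Rightarrow> real \<Rightarrow> real \<Rightarrow> real" where
  "tent x e y = max 0 (1 - \<bar>y - x\<bar> / e)"

lemma tent_center [simp]: "tent x e x = 1"
  by (simp add: tent_def)

lemma tent_outside_ball:
  assumes "e > 0" "y \<notin> ball x e"
  shows "tent x e y = 0"
  using assms by (auto simp: tent_def dist_real_def divide_simps)

lemma continuous_on_tent: "e \<noteq> 0 \<Longrightarrow> continuous_on UNIV (tent x e)"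
  unfolding tent_def by (intro continuous_intros) auto

lemma bounded_range_tent:
  assumes "e > 0"
  shows "bounded (range (tent x e))"
proof -
  have "norm (tent x e y) \<le> 1" for y
    using assms by (auto simp: tent_def)
  then show ?thesis
    unfolding bounded_iff by blast
qed

lemma CD_kernel_measurable:
  assumes "\<forall>j<r. w j \<in> borel_measurable borel"
  shows "CD_kernel r P A w i n x \<in> borel_measurable borel"
    and "(\<lambda>y. CD_kernel r P A w i n y x) \<in> borel_measurable borel"
proof -
  have "(\<lambda>y. poly p y) \<in> borel_measurable borel" for p :: "real poly"
    by (intro borel_measurable_continuous_onI continuous_on_poly continuous_on_id)
  then show "CD_kernel r P A w i n x \<in> borel_measurable borel"
    using assms unfolding CD_kernel_def Qfun_def
    by (intro borel_measurable_sum borel_measurable_times borel_measurable_const) auto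
  have "continuous_on UNIV (\<lambda>y. CD_kernel r P A w i n y x)"
    unfolding CD_kernel_def by (intro continuous_intros)
  then show "(\<lambda>y. CD_kernel r P A w i n y x) \<in> borel_measurable borel"
    by (rule borel_measurable_continuous_onI)
qed

lemma LIMSEQ_one_div_of_LIMSEQ_mult_one:
  fixes a :: "nat \<Rightarrow> 'a::real_normed_field"
  assumes lim: "(\<lambda>n. a n * c) \<longlonglongrightarrow> 1"
  shows "a \<longlonglongrightarrow> 1 / c"
proof -
  have "c \<noteq> 0"
  proof
    assume "c = 0"
    then have "(\<lambda>n. 0::'a) \<longlonglongrightarrow> 1" using lim by simp
    then show False using LIMSEQ_unique[OF tendsto_const] by fastforce
  qed
  have "(\<lambda>n. a n * c / c) \<longlonglongrightarrow> 1 / c"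
    by (intro tendsto_divide lim tendsto_const \<open>c \<noteq> 0\<close>)
  then show ?thesis
    using \<open>c \<noteq> 0\<close> by simp
qed

theorem proposition6:
  fixes r :: nat and \<mu>s :: "nat \<Rightarrow> real measure" and \<mu> :: "real measure"
    and P :: "(nat \<Rightarrow> nat) \<Rightarrow> real poly" and A :: "(nat \<Rightarrow> nat) \<Rightarrow> nat \<Rightarrow> real poly"
    and w :: "nat \<Rightarrow> real \<Rightarrow> real" and i :: "nat \<Rightarrow> nat" and x :: real
  assumes r: "r \<ge> 1"
    and sets_mus: "\<forall>j<r. sets (\<mu>s j) = sets borel"
    and moments: "\<forall>j<r. \<forall>k::nat. integrable (\<mu>s j) (\<lambda>t. t ^ k)"
    and perfect: "typeII_mops r \<mu>s P"
    and typeI: "typeI_mops r \<mu>s A"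
    and sets_mu: "sets \<mu> = sets borel"
    and w_meas: "\<forall>j<r. w j \<in> borel_measurable borel"
    and w_nonneg: "\<forall>j<r. \<forall>t. w j t \<ge> 0"
    and w_RN: "\<forall>j<r. \<mu>s j = density \<mu> (\<lambda>t. ennreal (w j t))"
    and path: "\<forall>l. i l < r"
    and x_supp: "x \<in> msupp \<mu>"
    and x_isolated: "\<exists>e>0. msupp \<mu> \<inter> ball x e = {x}"
    and K_nonzero: "\<forall>\<^sub>F n in sequentially. CD_kernel r P A w i n x x \<noteq> 0"
    and G_conv: "\<forall>f::real \<Rightarrow> real. continuous_on UNIV f \<and> bounded (range f) \<longrightarrow>
                   ((\<lambda>n. G_op \<mu> (CD_kernel r P A w i n) f x) \<longlongrightarrow> f x) sequentially"
  shows "(\<lambda>n. CD_kernel r P A w i n x x) \<longlonglongrightarrow> 1 / measure \<mu> {x}"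
proof -
  let ?K = "\<lambda>n. CD_kernel r P A w i n"
  obtain e where "e > 0" and isolated: "msupp \<mu> \<inter> ball x e = {x}"
    using x_isolated by blast
  let ?f = "tent x e"
  have f_cont: "continuous_on UNIV ?f"
    using \<open>e > 0\<close> by (simp add: continuous_on_tent)
  have "(\<lambda>n. G_op \<mu> (?K n) ?f x) \<longlonglongrightarrow> ?f x"
    using G_conv f_cont bounded_range_tent[OF \<open>e > 0\<close>] by blast
  then have "(\<lambda>n. G_op \<mu> (?K n) ?f x) \<longlonglongrightarrow> 1"
    by simp
  moreover have "\<forall>\<^sub>F n in sequentially. G_op \<mu> (?K n) ?f x = ?K n x x * measure \<mu> {x}"
    using K_nonzero
  proof eventually_elim
    case (elim n)
    show ?case
      using G_op_isolated_msupp_point[OF sets_mu isolated CD_kernel_measurable[OF w_meas]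
          borel_measurable_continuous_onI[OF f_cont] tent_outside_ball[OF \<open>e > 0\<close>] tent_center elim] .
  qed
  ultimately have "(\<lambda>n. ?K n x x * measure \<mu> {x}) \<longlonglongrightarrow> 1"
    by (rule Lim_transform_eventually)
  then show ?thesis
    by (rule LIMSEQ_one_div_of_LIMSEQ_mult_one)
qed

end
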